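(* Let $f:\mathbb{R}^n\to\mathbb{R}$ be twice continuously differentiable with $L$-Lipschitz gradient and let $0<\alpha<\frac1L$. Then the map $g_{\alpha(-f)}=g^1_{\alpha(-f)}\circ g^2_{\alpha(-f)}\circ\cdots\circ g^p_{\alpha(-f)}$ is invertible and its inverse $[g_{\alpha(-f)}]^{-1}$ (the PBCD iteration map, $x_{k+1}=[g_{\alpha(-f)}]^{-1}(x_k)$) is a diffeomorphism of $\mathbb{R}^n$.
   Context: $\|\nabla f(x)-\nabla f(y)\|\le L\|x-y\|$ for all $x,y$, $L>0$. The variable is partitioned as $x=(x(1),\dots,x(p))$, $x(s)\in\mathbb{R}^{n_s}$, $\sum_sn_s=n$; $U_s\in\mathbb{R}^{n\times n_s}$ is the $s$-th block-column of $I_n$ and $\nabla_sf(x)=U_s^T\nabla f(x)$. Define $g^s_{\alpha(-f)}(x)=x+\alpha U_s\nabla_s f(x)$, $s=1,\dots,p$. *)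

theory Defs
  imports "HOL-Analysis.Analysis"
begin

definition C1_map :: "('a::real_normed_vector \<Rightarrow> 'b::real_normed_vector) \<Rightarrow> bool" where
  "C1_map h \<longleftrightarrow> (\<exists>D :: 'a \<Rightarrow> 'a \<Rightarrow>\<^sub>L 'b.
      (\<forall>x. (h has_derivative blinfun_apply (D x)) (at x)) \<and> continuous_on UNIV D)"

definition diffeomorphism :: "('a::real_normed_vector \<Rightarrow> 'a) \<Rightarrow> bool" where
  "diffeomorphism h \<longleftrightarrow> bij h \<and> C1_map h \<and> C1_map (inv h)"

text \<open>U_s (nabla_s f)(x): keep the gradient components belonging to block B s, zero elsewhere.\<close>
definition block_part :: "('n::finite) set \<Rightarrow> real^'n \<Rightarrow> real^'n" where
  "block_part S v = (\<chi> i. if i \<in> S then v $ i else 0)"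

definition g_block :: "real \<Rightarrow> (real^'n \<Rightarrow> real^'n) \<Rightarrow> ('n::finite) set \<Rightarrow> real^'n \<Rightarrow> real^'n" where
  "g_block \<alpha> gradf S x = x + \<alpha> *\<^sub>R block_part S (gradf x)"

definition g_comp :: "real \<Rightarrow> (real^'n \<Rightarrow> real^'n) \<Rightarrow> (nat \<Rightarrow> ('n::finite) set) \<Rightarrow> nat
    \<Rightarrow> real^'n \<Rightarrow> real^'n" where
  "g_comp \<alpha> gradf B p = foldr (\<lambda>s h. g_block \<alpha> gradf (B s) \<circ> h) [1..<p+1] id"

end

theory Submission
  imports Defs
begin

text \<open>Each block map \<open>g\<^sup>s\<close> is a perturbation \<open>x + \<phi>(x)\<close> of the identity by a \<open>C\<^sup>1\<close> map \<open>\<phi>\<close>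
  that is a contraction, since \<open>\<phi>\<close> is \<open>\<alpha>\<close> times a coordinate projection of the \<open>L\<close>-Lipschitz
  gradient and \<open>\<alpha> L < 1\<close>. Such a perturbation is a bijection (Banach's fixed point theorem
  solves \<open>x + \<phi>(x) = y\<close>), and its derivative \<open>I + D\<phi>(x)\<close> is bounded below by \<open>1 - \<alpha> L\<close>
  uniformly in \<open>x\<close>; by the inverse function theorem the inverse is differentiable, and the
  uniform bound makes operator inversion Lipschitz along the derivatives, so the inverse is
  \<open>C\<^sup>1\<close>. Diffeomorphisms are closed under composition and inversion.\<close>

lemma norm_derivative_le_lipschitz:
  fixes F :: "'a::real_normed_vector \<Rightarrow> 'b::real_normed_vector"
  assumes der: "(F has_derivative F') (at x)"
    and lip: "k-lipschitz_on UNIV F"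
  shows "norm (F' v) \<le> k * norm v"
proof (cases "v = 0")
  case True
  then show ?thesis
    using der has_derivative_linear linear_0 by fastforce
next
  case False
  have bl: "bounded_linear F'"
    using der has_derivative_bounded_linear by blast
  have approx: "norm (F' v) \<le> (k + e) * norm v" if e: "e > 0" for e
  proof -
    obtain d where d: "d > 0"
      "\<forall>y. norm (y - x) < d \<longrightarrow> norm (F y - F x - F' (y - x)) \<le> e * norm (y - x)"
      using der e unfolding has_derivative_at_alt by blast
    define t where "t = d / (2 * norm v)"
    have t: "t > 0"
      using d False by (simp add: t_def)
    have "norm ((x + t *\<^sub>R v) - x) < d"
      using d False by (simp add: t_def)
    then have rem: "norm (F (x + t *\<^sub>R v) - F x - F' (t *\<^sub>R v)) \<le> e * (t * norm v)"
      using d(2)[rule_format, of "x + t *\<^sub>R v"] t by simp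
    have inc: "norm (F (x + t *\<^sub>R v) - F x) \<le> k * (t * norm v)"
      using lipschitz_on_normD[OF lip, of "x + t *\<^sub>R v" x] t by simp
    have "t * norm (F' v) = norm (F' (t *\<^sub>R v))"
      using t by (simp add: linear_simps(5)[OF bl])
    also have "\<dots> \<le> norm (F (x + t *\<^sub>R v) - F x) + norm (F (x + t *\<^sub>R v) - F x - F' (t *\<^sub>R v))"
      using norm_triangle_ineq4[of "F (x + t *\<^sub>R v) - F x" "F (x + t *\<^sub>R v) - F x - F' (t *\<^sub>R v)"]
      by simp
    also have "\<dots> \<le> t * ((k + e) * norm v)"
      using rem inc by (simp add: algebra_simps)
    finally show ?thesis
      using t by simp
  qed
  have nv: "norm v > 0"
    using False by simp
  show ?thesis
  proof (rule field_le_epsilon)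
    fix e :: real
    assume "e > 0"
    then have "norm (F' v) \<le> (k + e / norm v) * norm v"
      using approx nv by simp
    also have "\<dots> = k * norm v + e"
      using nv by (simp add: field_simps)
    finally show "norm (F' v) \<le> k * norm v + e" .
  qed
qed

lemma blinfun_inverse_bounded_below:
  fixes A :: "'a::euclidean_space \<Rightarrow>\<^sub>L 'a"
  assumes c: "c > 0" and below: "\<And>v. c * norm v \<le> norm (A v)"
  obtains Ai where "Ai o\<^sub>L A = id_blinfun" "A o\<^sub>L Ai = id_blinfun" "norm Ai \<le> 1 / c"
proof -
  have "inj (blinfun_apply A)"
  proof (rule injI)
    fix u v
    assume "A u = A v"
    then have "c * norm (u - v) \<le> 0"
      using below[of "u - v"] by (simp add: blinfun.diff_right)
    then show "u = v"
      using c by (simp add: mult_le_0_iff)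
  qed
  then obtain f where f: "linear f" "\<And>v. f (A v) = v" "\<And>w. A (f w) = w"
    using linear_injective_isomorphism[OF bounded_linear.linear[OF blinfun.bounded_linear_right]] by blast
  have bl: "bounded_linear f"
    using f(1) linear_conv_bounded_linear by blast
  show ?thesis
  proof
    show "Blinfun f o\<^sub>L A = id_blinfun" "A o\<^sub>L Blinfun f = id_blinfun"
      by (auto intro!: blinfun_eqI simp: bounded_linear_Blinfun_apply[OF bl] f)
    show "norm (Blinfun f) \<le> 1 / c"
    proof (rule norm_blinfun_bound)
      fix w
      have "c * norm (f w) \<le> norm w"
        using below[of "f w"] by (simp add: f)
      then show "norm (Blinfun f w) \<le> 1 / c * norm w"
        using c by (simp add: bounded_linear_Blinfun_apply[OF bl] field_simps)
    qed (use c in simp)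
  qed
qed

lemma norm_diff_blinfun_inverses:
  assumes left: "Ai o\<^sub>L A = id_blinfun" and right: "B o\<^sub>L Bi = id_blinfun"
  shows "norm (Ai - Bi) \<le> norm Ai * norm (A - B) * norm Bi"
proof -
  have "Ai (A u) = u" "B (Bi w) = w" for u w
    using left right by (simp_all flip: blinfun_apply_blinfun_compose)
  then have "Ai - Bi = Ai o\<^sub>L (B - A) o\<^sub>L Bi"
    by (auto intro!: blinfun_eqI simp: blinfun.diff_left blinfun.diff_right)
  also have "norm \<dots> \<le> norm (Ai o\<^sub>L (B - A)) * norm Bi"
    by (rule norm_blinfun_compose)
  also have "\<dots> \<le> norm Ai * norm (B - A) * norm Bi"
    by (intro mult_right_mono norm_blinfun_compose norm_ge_zero)
  finally show ?thesis
    by (simp add: norm_minus_commute)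
qed

lemma continuous_on_blinfun_inverses:
  fixes A :: "'c::topological_space \<Rightarrow> 'a::real_normed_vector \<Rightarrow>\<^sub>L 'b::real_normed_vector"
  assumes cont: "continuous_on UNIV A"
    and left: "\<And>y. Ai y o\<^sub>L A y = id_blinfun" and right: "\<And>y. A y o\<^sub>L Ai y = id_blinfun"
    and bound: "\<And>y. norm (Ai y) \<le> K"
  shows "continuous_on UNIV Ai"
proof -
  have "((\<lambda>y'. Ai y' - Ai y) \<longlongrightarrow> 0) (at y)" for y
  proof (rule Lim_null_comparison)
    have "norm (Ai y' - Ai y) \<le> K * norm (A y' - A y) * K" for y'
    proof -
      have "norm (Ai y' - Ai y) \<le> norm (Ai y') * norm (A y' - A y) * norm (Ai y)"
        by (rule norm_diff_blinfun_inverses[OF left right])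
      also have "\<dots> \<le> K * norm (A y' - A y) * K"
        using order_trans[OF norm_ge_zero bound[of y]]
        by (intro mult_mono bound mult_nonneg_nonneg norm_ge_zero order_refl)
      finally show ?thesis .
    qed
    then show "\<forall>\<^sub>F y' in at y. norm (Ai y' - Ai y) \<le> K * norm (A y' - A y) * K"
      by simp
    have "((\<lambda>y'. A y') \<longlongrightarrow> A y) (at y)"
      using cont by (simp add: continuous_on_def)
    then have "((\<lambda>y'. A y' - A y) \<longlongrightarrow> A y - A y) (at y)"
      by (intro tendsto_intros)
    then show "((\<lambda>y'. K * norm (A y' - A y) * K) \<longlongrightarrow> 0) (at y)"
      using tendsto_mult_left_zero[OF tendsto_mult_right_zero[OF tendsto_norm_zero]] by simp
  qed
  then show ?thesis
    by (simp add: continuous_on_def LIM_zero_cancel)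
qed

lemma C1_map_id: "C1_map (id :: 'a::real_normed_vector \<Rightarrow> 'a)"
  unfolding C1_map_def
  by (rule exI[of _ "\<lambda>_. id_blinfun"]) (auto simp: id_def intro: has_derivative_ident)

lemma C1_map_comp:
  fixes f :: "'b::real_normed_vector \<Rightarrow> 'c::real_normed_vector"
    and g :: "'a::real_normed_vector \<Rightarrow> 'b"
  assumes "C1_map f" "C1_map g"
  shows "C1_map (f \<circ> g)"
proof -
  obtain Df :: "'b \<Rightarrow> 'b \<Rightarrow>\<^sub>L 'c" where Df: "\<forall>x. (f has_derivative Df x) (at x)" "continuous_on UNIV Df"
    using assms(1) unfolding C1_map_def by blast
  obtain Dg :: "'a \<Rightarrow> 'a \<Rightarrow>\<^sub>L 'b" where Dg: "\<forall>x. (g has_derivative Dg x) (at x)" "continuous_on UNIV Dg"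
    using assms(2) unfolding C1_map_def by blast
  have "((f \<circ> g) has_derivative (Df (g x) o\<^sub>L Dg x)) (at x)" for x
    using diff_chain_at[OF Dg(1)[rule_format] Df(1)[rule_format]]
    by (simp add: blinfun_compose.rep_eq)
  moreover have "continuous_on UNIV (\<lambda>x. Df (g x) o\<^sub>L Dg x)"
  proof (rule bounded_bilinear.continuous_on[OF bounded_bilinear_blinfun_compose _ Dg(2)])
    have "continuous_on UNIV g"
      using Dg(1) by (meson continuous_at_imp_continuous_on has_derivative_continuous)
    then show "continuous_on UNIV (\<lambda>x. Df (g x))"
      using continuous_on_compose2[OF Df(2)] by blast
  qed
  ultimately show ?thesis
    unfolding C1_map_def by (intro exI[of _ "\<lambda>x. Df (g x) o\<^sub>L Dg x"]) blast
qed

text \<open>The global inverse function theorem, for a derivative bounded below uniformly.\<close>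

lemma C1_map_inv:
  fixes h :: "'a::euclidean_space \<Rightarrow> 'a" and Dh :: "'a \<Rightarrow> 'a \<Rightarrow>\<^sub>L 'a"
  assumes bij: "bij h"
    and der: "\<And>x. (h has_derivative Dh x) (at x)"
    and cont: "continuous_on UNIV Dh"
    and c: "c > 0" and below: "\<And>x v. c * norm v \<le> norm (Dh x v)"
  shows "C1_map (inv h)"
proof -
  define g where "g = inv h"
  have hg: "h (g y) = y" and gh: "g (h x) = x" for x y
    using bij by (simp_all add: g_def bij_is_surj bij_is_inj surj_f_inv_f inv_f_f)
  have "\<exists>A. A o\<^sub>L Dh x = id_blinfun \<and> Dh x o\<^sub>L A = id_blinfun \<and> norm A \<le> 1 / c" for x
    using blinfun_inverse_bounded_below[OF c below] by blast
  then obtain Ai where Ai: "\<And>x. Ai x o\<^sub>L Dh x = id_blinfun" "\<And>x. Dh x o\<^sub>L Ai x = id_blinfun"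
    "\<And>x. norm (Ai x) \<le> 1 / c"
    by metis
  have der_g: "(g has_derivative Ai (g y)) (at y)" for y
  proof -
    have "continuous_on UNIV h"
      using der by (meson continuous_at_imp_continuous_on has_derivative_continuous)
    moreover have "blinfun_apply (Dh (g y)) \<circ> blinfun_apply (Ai (g y)) = id"
      using Ai(2) by (simp add: fun_eq_iff flip: blinfun_apply_blinfun_compose)
    ultimately have "(g has_derivative Ai (g y)) (at (h (g y)))"
      using has_derivative_inverse_strong[OF open_UNIV UNIV_I _ _ der] gh by blast
    then show ?thesis
      by (simp add: hg)
  qed
  have "continuous_on UNIV g"
    using der_g by (meson continuous_at_imp_continuous_on has_derivative_continuous)
  then have "continuous_on UNIV (\<lambda>y. Dh (g y))"
    using continuous_on_compose2[OF cont] by blast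
  then have cont_Ai_g: "continuous_on UNIV (\<lambda>y. Ai (g y))"
    by (rule continuous_on_blinfun_inverses) (use Ai in simp_all)
  show ?thesis
    unfolding C1_map_def g_def[symmetric] using der_g cont_Ai_g
    by (intro exI[of _ "\<lambda>y. Ai (g y)"]) blast
qed

lemma diffeomorphism_id: "diffeomorphism (id :: 'a::real_normed_vector \<Rightarrow> 'a)"
  unfolding diffeomorphism_def using C1_map_id by (simp add: inv_id)

lemma diffeomorphism_comp:
  fixes f g :: "'a::real_normed_vector \<Rightarrow> 'a"
  assumes "diffeomorphism f" "diffeomorphism g"
  shows "diffeomorphism (f \<circ> g)"
  using assms unfolding diffeomorphism_def
  by (simp add: bij_comp o_inv_distrib C1_map_comp)

lemma diffeomorphism_inv:
  fixes f :: "'a::real_normed_vector \<Rightarrow> 'a"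
  assumes "diffeomorphism f"
  shows "diffeomorphism (inv f)"
  using assms unfolding diffeomorphism_def
  by (simp add: bij_imp_bij_inv inv_inv_eq)

lemma diffeomorphism_foldr_comp:
  assumes "\<And>s. s \<in> set xs \<Longrightarrow> diffeomorphism (F s)"
  shows "diffeomorphism (foldr (\<lambda>s h. F s \<circ> h) xs id)"
  using assms by (induction xs) (simp_all add: diffeomorphism_id diffeomorphism_comp)

lemma norm_diff_plus_contraction_ge:
  fixes \<phi> :: "'a::real_normed_vector \<Rightarrow> 'a"
  assumes lip: "k-lipschitz_on UNIV \<phi>"
  shows "(1 - k) * norm (x - y) \<le> norm ((x + \<phi> x) - (y + \<phi> y))"
proof -
  have "x - y = ((x + \<phi> x) - (y + \<phi> y)) - (\<phi> x - \<phi> y)"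
    by (simp add: algebra_simps)
  then have "norm (x - y) \<le> norm ((x + \<phi> x) - (y + \<phi> y)) + norm (\<phi> x - \<phi> y)"
    by (metis norm_triangle_ineq4)
  then show ?thesis
    using lipschitz_on_normD[OF lip, of x y] by (simp add: algebra_simps)
qed

lemma bij_plus_contraction:
  fixes \<phi> :: "'a::banach \<Rightarrow> 'a"
  assumes k: "k < 1" and lip: "k-lipschitz_on UNIV \<phi>"
  shows "bij (\<lambda>x. x + \<phi> x)"
proof (rule bijI)
  show "inj (\<lambda>x. x + \<phi> x)"
  proof (rule injI)
    fix x y
    assume "x + \<phi> x = y + \<phi> y"
    then have "(1 - k) * norm (x - y) \<le> 0"
      using norm_diff_plus_contraction_ge[OF lip, of x y] by simp
    then show "x = y"
      using k by (simp add: mult_le_0_iff)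
  qed
  have "\<exists>x. x + \<phi> x = y" for y
  proof -
    have "\<exists>!x. y - \<phi> x = x"
    proof (rule banach_fix_type[OF lipschitz_on_nonneg[OF lip] k])
      show "\<forall>x z. dist (y - \<phi> x) (y - \<phi> z) \<le> k * dist x z"
        using lipschitz_on_normD[OF lip] by (simp add: dist_norm norm_minus_commute)
    qed
    then show ?thesis
      by (metis diff_add_cancel)
  qed
  then show "surj (\<lambda>x. x + \<phi> x)"
    by (auto simp: surj_def eq_commute)
qed

lemma diffeomorphism_plus_contraction:
  fixes \<phi> :: "'a::euclidean_space \<Rightarrow> 'a" and D\<phi> :: "'a \<Rightarrow> 'a \<Rightarrow>\<^sub>L 'a"
  assumes k: "k < 1" and lip: "k-lipschitz_on UNIV \<phi>"
    and der: "\<And>x. (\<phi> has_derivative D\<phi> x) (at x)"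
    and cont: "continuous_on UNIV D\<phi>"
  shows "diffeomorphism (\<lambda>x. x + \<phi> x)"
proof -
  define Dh where "Dh x = id_blinfun + D\<phi> x" for x
  have der_h: "((\<lambda>x. x + \<phi> x) has_derivative Dh x) (at x)" for x
  proof -
    have "blinfun_apply (Dh x) = (\<lambda>v. v + D\<phi> x v)"
      by (auto simp: Dh_def blinfun.add_left)
    then show ?thesis
      using has_derivative_add[OF has_derivative_ident der] by simp
  qed
  have cont_Dh: "continuous_on UNIV Dh"
    unfolding Dh_def by (intro continuous_on_add continuous_on_const cont)
  have below: "(1 - k) * norm v \<le> norm (Dh x v)" for x v
  proof -
    have "v = Dh x v - D\<phi> x v"
      by (simp add: Dh_def blinfun.add_left)
    then have "norm v \<le> norm (Dh x v) + norm (D\<phi> x v)"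
      by (metis norm_triangle_ineq4)
    then show ?thesis
      using norm_derivative_le_lipschitz[OF der[of x] lip, of v] by (simp add: algebra_simps)
  qed
  have "C1_map (\<lambda>x. x + \<phi> x)"
    unfolding C1_map_def using der_h cont_Dh by blast
  moreover have "C1_map (inv (\<lambda>x. x + \<phi> x))"
    using C1_map_inv[OF bij_plus_contraction[OF k lip] der_h cont_Dh _ below] k by simp
  ultimately show ?thesis
    unfolding diffeomorphism_def using bij_plus_contraction[OF k lip] by blast
qed

lemma bounded_linear_block_part: "bounded_linear (block_part S :: real^'n::finite \<Rightarrow> real^'n)"
proof -
  have "linear (block_part S :: real^'n \<Rightarrow> real^'n)"
    by (rule linearI) (auto simp: block_part_def vec_eq_iff)
  then show ?thesis
    using linear_conv_bounded_linear by blast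
qed

lemma norm_block_part_le: "norm (block_part S v) \<le> norm (v :: real^'n::finite)"
  by (rule norm_le_componentwise_cart) (simp add: block_part_def)

lemma diffeomorphism_g_block:
  fixes gradf :: "real^'n::finite \<Rightarrow> real^'n" and H :: "real^'n \<Rightarrow> ((real^'n) \<Rightarrow>\<^sub>L (real^'n))"
  assumes hess: "\<And>x. (gradf has_derivative H x) (at x)"
    and hess_cont: "continuous_on UNIV H"
    and lip: "L-lipschitz_on UNIV gradf"
    and \<alpha>: "0 < \<alpha>" "\<alpha> * L < 1"
  shows "diffeomorphism (g_block \<alpha> gradf S)"
proof -
  define \<phi> where "\<phi> x = \<alpha> *\<^sub>R block_part S (gradf x)" for x
  define P where "P = Blinfun (block_part S :: real^'n \<Rightarrow> real^'n)"
  have P: "blinfun_apply P = block_part S"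
    by (simp add: P_def bounded_linear_Blinfun_apply[OF bounded_linear_block_part])
  have lip_\<phi>: "(\<alpha> * L)-lipschitz_on UNIV \<phi>"
  proof (rule lipschitz_onI)
    fix x y :: "real^'n"
    have "dist (\<phi> x) (\<phi> y) = \<alpha> * norm (block_part S (gradf x - gradf y))"
      using \<alpha> by (simp add: \<phi>_def dist_norm P[symmetric] blinfun.diff_right flip: scaleR_diff_right)
    also have "\<dots> \<le> \<alpha> * norm (gradf x - gradf y)"
      using \<alpha> norm_block_part_le by (simp add: mult_left_mono)
    also have "\<dots> \<le> \<alpha> * (L * dist x y)"
      using \<alpha> lipschitz_on_normD[OF lip] by (simp add: mult_left_mono dist_norm)
    finally show "dist (\<phi> x) (\<phi> y) \<le> \<alpha> * L * dist x y"
      by simp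
  qed (use \<alpha> lipschitz_on_nonneg[OF lip] in simp)
  have "(\<phi> has_derivative \<alpha> *\<^sub>R (P o\<^sub>L H x)) (at x)" for x
  proof -
    have "blinfun_apply (\<alpha> *\<^sub>R (P o\<^sub>L H x)) = (\<lambda>v. \<alpha> *\<^sub>R block_part S (H x v))"
      by (simp add: fun_eq_iff P blinfun.scaleR_left)
    then show ?thesis
      unfolding \<phi>_def
      using has_derivative_scaleR_right[OF bounded_linear.has_derivative[OF
            bounded_linear_block_part hess]] by simp
  qed
  moreover have "continuous_on UNIV (\<lambda>x. \<alpha> *\<^sub>R (P o\<^sub>L H x))"
    by (intro continuous_on_scaleR continuous_on_const
        bounded_bilinear.continuous_on[OF bounded_bilinear_blinfun_compose] hess_cont)
  ultimately have "diffeomorphism (\<lambda>x. x + \<phi> x)"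
    by (rule diffeomorphism_plus_contraction[OF \<alpha>(2) lip_\<phi>])
  moreover have "g_block \<alpha> gradf S = (\<lambda>x. x + \<phi> x)"
    by (simp add: fun_eq_iff g_block_def \<phi>_def)
  ultimately show ?thesis
    by simp
qed

theorem proposition8:
  fixes f :: "real^'n \<Rightarrow> real"
    and gradf :: "real^'n \<Rightarrow> real^'n"
    and H :: "real^'n \<Rightarrow> ((real^'n) \<Rightarrow>\<^sub>L (real^'n))"
    and L \<alpha> :: real
    and p :: nat
    and B :: "nat \<Rightarrow> 'n set"
  assumes grad: "\<forall>x. (f has_derivative (\<lambda>h. gradf x \<bullet> h)) (at x)"
    and hess: "\<forall>x. (gradf has_derivative blinfun_apply (H x)) (at x)"
    and hess_cont: "continuous_on UNIV H"
    and L_pos: "L > 0"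
    and lipschitz: "\<forall>x y. norm (gradf x - gradf y) \<le> L * norm (x - y)"
    and alpha: "0 < \<alpha>" "\<alpha> < 1 / L"
    and p_pos: "p \<ge> 1"
    and blocks_nonempty: "\<forall>s\<in>{1..p}. B s \<noteq> {}"
    and blocks_disjoint: "\<forall>s\<in>{1..p}. \<forall>t\<in>{1..p}. s \<noteq> t \<longrightarrow> B s \<inter> B t = {}"
    and blocks_cover: "(\<Union>s\<in>{1..p}. B s) = UNIV"
  shows "bij (g_comp \<alpha> gradf B p) \<and> diffeomorphism (inv (g_comp \<alpha> gradf B p))"
proof -
  have lip: "L-lipschitz_on UNIV gradf"
    using lipschitz L_pos by (intro lipschitz_onI) (simp_all add: dist_norm)
  have "\<alpha> * L < 1"
    using alpha L_pos by (simp add: field_simps)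
  then have "diffeomorphism (g_block \<alpha> gradf S)" for S
    using diffeomorphism_g_block[OF _ hess_cont lip alpha(1)] hess by blast
  then have "diffeomorphism (g_comp \<alpha> gradf B p)"
    unfolding g_comp_def by (rule diffeomorphism_foldr_comp)
  then show ?thesis
    using diffeomorphism_inv unfolding diffeomorphism_def by blast
qed

end
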